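(* Let $q$ be a prime power and $h$ a nonnegative integer. If $M$ is a matroid and $X\subseteq E(M)$ satisfies $r_M(X)\le h$ and $\mathrm{si}(M\setminus X)\cong \mathrm{PG}(r(M)-1,q)$, then $M/X$ has no $(q,h+1)$-stack restriction.
   Context: $\mathrm{si}(\cdot)$ denotes simplification and $\mathrm{PG}(k-1,q)$ the rank-$k$ projective geometry over $\mathrm{GF}(q)$. For a prime power $q$ and nonnegative integers $h,t$, a matroid $S$ is a $(q,h,t)$-stack if there are pairwise disjoint subsets $F_1,\dots,F_h$ of $E(S)$ whose union is spanning in $S$, such that for each $i\in\{1,\dots,h\}$ the matroid $(S/(F_1\cup\dots\cup F_{i-1}))|F_i$ has rank at most $t$ and is not $\mathrm{GF}(q)$-representable. A $(q,h)$-stack is a $(q,h,t)$-stack for some $t\ge 0$. A matroid has a stack restriction if some restriction of it is such a stack. *)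

theory Defs
  imports "HOL-Algebra.Ring" "HOL-Computational_Algebra.Primes"
begin

type_synonym 'a matroid = "'a set \<times> ('a set \<Rightarrow> bool)"

definition gr :: "'a matroid \<Rightarrow> 'a set" where "gr M = fst M"
definition ind :: "'a matroid \<Rightarrow> 'a set \<Rightarrow> bool" where "ind M = snd M"

definition matroid :: "'a matroid \<Rightarrow> bool" where
  "matroid M \<longleftrightarrow> finite (gr M)
     \<and> (\<forall>I. ind M I \<longrightarrow> I \<subseteq> gr M)
     \<and> ind M {}
     \<and> (\<forall>I J. ind M J \<and> I \<subseteq> J \<longrightarrow> ind M I)
     \<and> (\<forall>I J. ind M I \<and> ind M J \<and> card I < card J \<longrightarrow>
            (\<exists>e\<in>J - I. ind M (insert e I)))"

definition mrank :: "'a matroid \<Rightarrow> 'a set \<Rightarrow> nat" where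
  "mrank M X = Max {card I | I. I \<subseteq> X \<and> ind M I}"

definition restrict :: "'a matroid \<Rightarrow> 'a set \<Rightarrow> 'a matroid" where
  "restrict M F = (F, \<lambda>I. I \<subseteq> F \<and> ind M I)"

definition delete :: "'a matroid \<Rightarrow> 'a set \<Rightarrow> 'a matroid" where
  "delete M X = restrict M (gr M - X)"

definition contract :: "'a matroid \<Rightarrow> 'a set \<Rightarrow> 'a matroid" where
  "contract M X = (gr M - X,
     \<lambda>I. I \<subseteq> gr M - X \<and> mrank M (I \<union> X) = card I + mrank M X)"

definition matroid_iso :: "'a matroid \<Rightarrow> 'b matroid \<Rightarrow> bool" where
  "matroid_iso M N \<longleftrightarrow> (\<exists>f. bij_betw f (gr M) (gr N) \<and>
      (\<forall>I\<subseteq>gr M. ind M I \<longleftrightarrow> ind N (f ` I)))"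

text \<open>S is the ground set of a simplification of M: no loops, no two distinct
  parallel elements, and every non-loop of M is in S or parallel to an element of S.
  Then si(M) = M|S (unique up to isomorphism).\<close>
definition is_simplification_set :: "'a matroid \<Rightarrow> 'a set \<Rightarrow> bool" where
  "is_simplification_set M S \<longleftrightarrow> S \<subseteq> gr M
     \<and> (\<forall>e\<in>S. ind M {e})
     \<and> (\<forall>e\<in>S. \<forall>f\<in>S. e \<noteq> f \<longrightarrow> ind M {e, f})
     \<and> (\<forall>e\<in>gr M. ind M {e} \<longrightarrow> (\<exists>f\<in>S. e = f \<or> \<not> ind M {e, f}))"

definition vecs :: "('f, 'm) ring_scheme \<Rightarrow> nat \<Rightarrow> (nat \<Rightarrow> 'f) set" where
  "vecs R k = {x. (\<forall>i<k. x i \<in> carrier R) \<and> (\<forall>i\<ge>k. x i = \<zero>\<^bsub>R\<^esub>)}"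

definition zvec :: "('f, 'm) ring_scheme \<Rightarrow> nat \<Rightarrow> 'f" where
  "zvec R = (\<lambda>i. \<zero>\<^bsub>R\<^esub>)"

definition vsmult :: "('f, 'm) ring_scheme \<Rightarrow> nat \<Rightarrow> 'f \<Rightarrow> (nat \<Rightarrow> 'f) \<Rightarrow> (nat \<Rightarrow> 'f)" where
  "vsmult R k c x = (\<lambda>i. if i < k then c \<otimes>\<^bsub>R\<^esub> x i else \<zero>\<^bsub>R\<^esub>)"

text \<open>Linear independence of the family (v e) for e in I (as a family, so repeated
  vectors count as dependent).\<close>
definition lin_indep :: "('f, 'm) ring_scheme \<Rightarrow> nat \<Rightarrow> ('a \<Rightarrow> nat \<Rightarrow> 'f) \<Rightarrow> 'a set \<Rightarrow> bool" where
  "lin_indep R k v I \<longleftrightarrow> (\<forall>c. (\<forall>e\<in>I. c e \<in> carrier R) \<and>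
       (\<forall>i<k. finsum R (\<lambda>e. c e \<otimes>\<^bsub>R\<^esub> v e i) I = \<zero>\<^bsub>R\<^esub>)
       \<longrightarrow> (\<forall>e\<in>I. c e = \<zero>\<^bsub>R\<^esub>))"

text \<open>GF(q)-representability. Any two fields of order q are isomorphic (GF(q)),
  so we quantify over fields of order q, carried by a subset of nat.\<close>
definition representable :: "nat \<Rightarrow> 'a matroid \<Rightarrow> bool" where
  "representable q M \<longleftrightarrow> (\<exists>(R :: nat ring) k v.
      field R \<and> finite (carrier R) \<and> card (carrier R) = q
      \<and> (\<forall>e\<in>gr M. v e \<in> vecs R k)
      \<and> (\<forall>I\<subseteq>gr M. ind M I \<longleftrightarrow> lin_indep R k v I))"

definition vline :: "('f, 'm) ring_scheme \<Rightarrow> nat \<Rightarrow> (nat \<Rightarrow> 'f) \<Rightarrow> (nat \<Rightarrow> 'f) set" where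
  "vline R k x = {vsmult R k c x | c. c \<in> carrier R}"

definition PG_matroid :: "('f, 'm) ring_scheme \<Rightarrow> nat \<Rightarrow> (nat \<Rightarrow> 'f) set matroid" where
  "PG_matroid R k =
    ({vline R k x | x. x \<in> vecs R k \<and> x \<noteq> zvec R},
     \<lambda>S. S \<subseteq> {vline R k x | x. x \<in> vecs R k \<and> x \<noteq> zvec R} \<and>
         (\<forall>w. (\<forall>L\<in>S. w L \<in> L \<and> w L \<noteq> zvec R) \<longrightarrow> lin_indep R k w S))"

text \<open>N is isomorphic to PG(k-1,q), i.e. the rank-k projective geometry over GF(q).\<close>
definition iso_PG :: "'a matroid \<Rightarrow> nat \<Rightarrow> nat \<Rightarrow> bool" where
  "iso_PG N k q \<longleftrightarrow> (\<exists>R :: nat ring. field R \<and> finite (carrier R) \<and>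
      card (carrier R) = q \<and> matroid_iso N (PG_matroid R k))"

text \<open>(q,h,t)-stack, with sets indexed F 0, ..., F (h-1).\<close>
definition is_stack :: "nat \<Rightarrow> nat \<Rightarrow> nat \<Rightarrow> 'a matroid \<Rightarrow> bool" where
  "is_stack q h t S \<longleftrightarrow> (\<exists>F :: nat \<Rightarrow> 'a set.
      (\<forall>i<h. F i \<subseteq> gr S)
      \<and> (\<forall>i<h. \<forall>j<h. i \<noteq> j \<longrightarrow> F i \<inter> F j = {})
      \<and> mrank S (\<Union>i<h. F i) = mrank S (gr S)
      \<and> (\<forall>i<h. let N = restrict (contract S (\<Union>j<i. F j)) (F i) in
             mrank N (gr N) \<le> t \<and> \<not> representable q N))"

definition has_stack_restriction :: "nat \<Rightarrow> nat \<Rightarrow> 'a matroid \<Rightarrow> bool" where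
  "has_stack_restriction q h M \<longleftrightarrow>
     (\<exists>F\<subseteq>gr M. \<exists>t. is_stack q h t (restrict M F))"

definition prime_power :: "nat \<Rightarrow> bool" where
  "prime_power q \<longleftrightarrow> (\<exists>p n. prime p \<and> n \<ge> 1 \<and> q = p ^ n)"

end

theory Submission
  imports Defs
begin

text \<open>
  Every element of E(M)-X is a loop or parallel to a point of the projective geometry,
  so M restricted to E(M)-X is represented by vectors over a field of order q.  Given the
  layers F_0,...,F_h of a stack in (M/X)|F0, put U_i = F_0 \<union> ... \<union> F_(i-1) and consider the
  drop d_i = r(U_i \<union> X) - r(U_i).  By submodularity it is nonincreasing, and d_0 = r(X) \<le> h,
  so it stalls at some step i \<le> h.  At that step X is irrelevant: the i-th layer of the stack
  coincides with (M/U_i)|F_i, a contraction of a represented matroid, and is therefore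
  GF(q)-representable, contradicting the definition of a stack.
\<close>

lemma gr_pair [simp]: "gr (A, B) = A" by (simp add: gr_def)
lemma ind_pair [simp]: "ind (A, B) = B" by (simp add: ind_def)

lemma gr_restrict [simp]: "gr (restrict M F) = F"
  by (simp add: restrict_def)
lemma ind_restrict [simp]: "ind (restrict M F) I \<longleftrightarrow> I \<subseteq> F \<and> ind M I"
  by (simp add: restrict_def)
lemma gr_contract [simp]: "gr (contract M X) = gr M - X"
  by (simp add: contract_def)
lemma ind_contract [simp]:
  "ind (contract M X) I \<longleftrightarrow> I \<subseteq> gr M - X \<and> mrank M (I \<union> X) = card I + mrank M X"
  by (simp add: contract_def)
lemma gr_delete [simp]: "gr (delete M X) = gr M - X"
  by (simp add: delete_def)
lemma ind_delete [simp]: "ind (delete M X) I \<longleftrightarrow> I \<subseteq> gr M - X \<and> ind M I"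
  by (simp add: delete_def)

text \<open>The rank of a restriction agrees with the rank of the matroid on subsets of the
  restricting set; this holds for arbitrary (even ill-formed) matroid data.\<close>
lemma rank_restrict:
  assumes "Y \<subseteq> F"
  shows "mrank (restrict M F) Y = mrank M Y"
proof -
  have "{card I |I. I \<subseteq> Y \<and> ind (restrict M F) I} = {card I |I. I \<subseteq> Y \<and> ind M I}"
    using assms by auto
  thus ?thesis unfolding mrank_def by simp
qed

section \<open>Rank calculus\<close>

locale finite_matroid =
  fixes M :: "'a matroid"
  assumes wf: "matroid M"
begin

lemma finite_ground: "finite (gr M)"
  using wf by (simp add: matroid_def)

lemma ind_subset_ground: "ind M I \<Longrightarrow> I \<subseteq> gr M"
  using wf by (simp add: matroid_def)

lemma ind_finite: "ind M I \<Longrightarrow> finite I"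
  using ind_subset_ground finite_ground finite_subset by blast

lemma ind_empty: "ind M {}"
  using wf by (simp add: matroid_def)

lemma ind_subset: "ind M J \<Longrightarrow> I \<subseteq> J \<Longrightarrow> ind M I"
  using wf unfolding matroid_def by blast

lemma ind_augment:
  "ind M I \<Longrightarrow> ind M J \<Longrightarrow> card I < card J \<Longrightarrow> \<exists>e\<in>J - I. ind M (insert e I)"
  using wf unfolding matroid_def by blast

lemma rank_values_finite: "finite {card I |I. I \<subseteq> Y \<and> ind M I}"
proof -
  have "{card I |I. I \<subseteq> Y \<and> ind M I} \<subseteq> card ` Pow (gr M)"
    using ind_subset_ground by blast
  thus ?thesis using finite_ground finite_subset by blast
qed

lemma card_le_rank: "ind M I \<Longrightarrow> I \<subseteq> Y \<Longrightarrow> card I \<le> mrank M Y"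
  unfolding mrank_def using rank_values_finite by (intro Max_ge) auto

lemma basis_exists: "\<exists>B. B \<subseteq> Y \<and> ind M B \<and> card B = mrank M Y"
proof -
  have "mrank M Y \<in> {card I |I. I \<subseteq> Y \<and> ind M I}"
    unfolding mrank_def using rank_values_finite ind_empty by (intro Max_in) auto
  thus ?thesis by auto
qed

lemma basis_extend:
  assumes "ind M I" "I \<subseteq> Y"
  shows "\<exists>B. I \<subseteq> B \<and> B \<subseteq> Y \<and> ind M B \<and> card B = mrank M Y"
  using assms
proof (induction "mrank M Y - card I" arbitrary: I rule: less_induct)
  case less
  show ?case
  proof (cases "card I = mrank M Y")
    case True
    then show ?thesis using less.prems by blast
  next
    case False
    with card_le_rank[OF less.prems] have lt: "card I < mrank M Y" by simp
    obtain J where J: "J \<subseteq> Y" "ind M J" "card J = mrank M Y"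
      using basis_exists by blast
    then obtain e where e: "e \<in> J - I" "ind M (insert e I)"
      using ind_augment[OF less.prems(1) J(2)] lt by auto
    have "card (insert e I) = Suc (card I)"
      using e ind_finite[OF less.prems(1)] by simp
    hence "mrank M Y - card (insert e I) < mrank M Y - card I" using lt by simp
    from less.hyps[OF this e(2)] e J less.prems(2) show ?thesis by blast
  qed
qed

lemma rank_mono: "A \<subseteq> B \<Longrightarrow> mrank M A \<le> mrank M B"
  using basis_exists[of A] card_le_rank by (metis order_trans)

lemma rank_le_card: "finite A \<Longrightarrow> mrank M A \<le> card A"
  using basis_exists[of A] card_mono by metis

lemma rank_empty [simp]: "mrank M {} = 0"
  using rank_le_card[of "{}"] by simp

lemma ind_iff_rank_eq_card:
  assumes "finite I"
  shows "ind M I \<longleftrightarrow> mrank M I = card I"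
proof
  assume "ind M I"
  thus "mrank M I = card I" using card_le_rank rank_le_card[OF assms] by (simp add: le_antisym)
next
  assume r: "mrank M I = card I"
  obtain J where J: "J \<subseteq> I" "ind M J" "card J = mrank M I"
    using basis_exists by blast
  have "J = I" using card_subset_eq[OF assms J(1)] J(3) r by simp
  thus "ind M I" using J(2) by simp
qed

lemma rank_ind: "ind M I \<Longrightarrow> mrank M I = card I"
  using ind_iff_rank_eq_card ind_finite by blast

lemma rank_submod: "mrank M (A \<union> B) + mrank M (A \<inter> B) \<le> mrank M A + mrank M B"
proof -
  obtain I where I: "I \<subseteq> A \<inter> B" "ind M I" "card I = mrank M (A \<inter> B)"
    using basis_exists by blast
  then obtain J where J: "I \<subseteq> J" "J \<subseteq> A \<union> B" "ind M J" "card J = mrank M (A \<union> B)"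
    using basis_extend[of I "A \<union> B"] by blast
  have fJ: "finite J" using ind_finite J(3) by blast
  have a: "card (J \<inter> A) \<le> mrank M A" by (rule card_le_rank[OF ind_subset[OF J(3)]]) auto
  have b: "card (J \<inter> B) \<le> mrank M B" by (rule card_le_rank[OF ind_subset[OF J(3)]]) auto
  have "card (J \<inter> A) + card (J \<inter> B) = card ((J \<inter> A) \<union> (J \<inter> B)) + card ((J \<inter> A) \<inter> (J \<inter> B))"
    using fJ by (intro card_Un_Int) auto
  also have "(J \<inter> A) \<union> (J \<inter> B) = J" using J(2) by blast
  finally have c: "card (J \<inter> A) + card (J \<inter> B) = card J + card ((J \<inter> A) \<inter> (J \<inter> B))" .
  have "card I \<le> card ((J \<inter> A) \<inter> (J \<inter> B))"
    using I(1) J(1) fJ by (intro card_mono) auto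
  thus ?thesis using a b c I(3) J(4) by linarith
qed

lemma rank_union_le: "finite I \<Longrightarrow> mrank M (A \<union> I) \<le> mrank M A + card I"
  using rank_submod[of A I] rank_le_card[of I] by linarith

lemma rank_absorb_parallel:
  assumes "finite B" "\<forall>e\<in>B. \<exists>f\<in>A. mrank M {f, e} = mrank M {f}"
  shows "mrank M (A \<union> B) = mrank M A"
  using assms
proof (induction B rule: finite_induct)
  case empty
  then show ?case by simp
next
  case (insert e B)
  then obtain f where f: "f \<in> A" "mrank M {f, e} = mrank M {f}" by blast
  have IH: "mrank M (A \<union> B) = mrank M A" using insert by blast
  have "(A \<union> B) \<union> {f, e} = A \<union> insert e B" using f by auto
  with rank_submod[of "A \<union> B" "{f, e}"]
  have "mrank M (A \<union> insert e B) + mrank M ((A \<union> B) \<inter> {f, e})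
      \<le> mrank M (A \<union> B) + mrank M {f, e}"
    by simp
  moreover have "mrank M {f} \<le> mrank M ((A \<union> B) \<inter> {f, e})" using f by (intro rank_mono) auto
  moreover have "mrank M (A \<union> B) \<le> mrank M (A \<union> insert e B)" by (intro rank_mono) auto
  ultimately show ?case using IH f by linarith
qed

lemma rank_union_basis:
  assumes "B \<subseteq> U" "ind M B" "card B = mrank M U"
  shows "mrank M (Z \<union> U) = mrank M (Z \<union> B)"
proof -
  have "mrank M ((Z \<union> B) \<union> U) + mrank M ((Z \<union> B) \<inter> U) \<le> mrank M (Z \<union> B) + mrank M U"
    by (rule rank_submod)
  moreover have "(Z \<union> B) \<union> U = Z \<union> U" using assms by auto
  moreover have "mrank M B \<le> mrank M ((Z \<union> B) \<inter> U)" using assms by (intro rank_mono) auto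
  moreover have "mrank M (Z \<union> B) \<le> mrank M (Z \<union> U)" using assms by (intro rank_mono) auto
  ultimately show ?thesis using assms rank_ind by fastforce
qed

lemma rank_parallel_pair:
  assumes "ind M {s}" "ind M {e}" "e = s \<or> \<not> ind M {e, s}"
  shows "mrank M {s, e} = mrank M {s}" "mrank M {e, s} = mrank M {e}"
proof -
  have "mrank M {e, s} = 1"
  proof (cases "e = s")
    case True
    then show ?thesis using rank_ind[OF assms(2)] by simp
  next
    case False
    hence c: "card {e, s} = 2" by simp
    have "mrank M {e, s} \<le> 2" using rank_le_card[of "{e, s}"] c by simp
    moreover have "mrank M {e, s} \<noteq> 2"
      using ind_iff_rank_eq_card[of "{e, s}"] c assms(3) False by auto
    moreover have "mrank M {e} \<le> mrank M {e, s}" by (rule rank_mono) auto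
    ultimately show ?thesis using rank_ind[OF assms(2)] by simp
  qed
  thus "mrank M {s, e} = mrank M {s}" "mrank M {e, s} = mrank M {e}"
    using rank_ind[OF assms(1)] rank_ind[OF assms(2)] by (simp_all add: insert_commute)
qed

lemma rank_parallel_image:
  assumes "finite J"
    and par: "\<And>e. e \<in> J \<Longrightarrow> ind M {e} \<and> ind M {\<sigma> e} \<and> (e = \<sigma> e \<or> \<not> ind M {e, \<sigma> e})"
  shows "mrank M (\<sigma> ` J) = mrank M J"
proof -
  have "\<forall>e\<in>J. \<exists>f\<in>\<sigma> ` J. mrank M {f, e} = mrank M {f}"
    using par rank_parallel_pair(1) by blast
  hence "mrank M (\<sigma> ` J \<union> J) = mrank M (\<sigma> ` J)"
    using rank_absorb_parallel[OF assms(1)] by blast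
  moreover have "\<forall>s\<in>\<sigma> ` J. \<exists>f\<in>J. mrank M {f, s} = mrank M {f}"
    using par rank_parallel_pair(2) by blast
  hence "mrank M (J \<union> \<sigma> ` J) = mrank M J"
    using rank_absorb_parallel finite_imageI[OF assms(1)] by blast
  ultimately show ?thesis by (simp add: sup_commute)
qed

text \<open>This reduces independence in a matroid to
  independence in its simplification.\<close>
lemma ind_iff_parallel_image:
  assumes "finite J"
    and par: "\<And>e. e \<in> J \<Longrightarrow> ind M {e} \<Longrightarrow> ind M {\<sigma> e} \<and> (e = \<sigma> e \<or> \<not> ind M {e, \<sigma> e})"
  shows "ind M J \<longleftrightarrow> (\<forall>e\<in>J. ind M {e}) \<and> inj_on \<sigma> J \<and> ind M (\<sigma> ` J)"
proof (cases "\<forall>e\<in>J. ind M {e}")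
  case True
  have r: "mrank M (\<sigma> ` J) = mrank M J" using rank_parallel_image assms True by blast
  have c: "card (\<sigma> ` J) \<le> card J" using card_image_le[OF assms(1)] .
  have "ind M J \<longleftrightarrow> mrank M J = card J" using ind_iff_rank_eq_card[OF assms(1)] .
  also have "\<dots> \<longleftrightarrow> inj_on \<sigma> J \<and> mrank M (\<sigma> ` J) = card (\<sigma> ` J)"
  proof
    assume "mrank M J = card J"
    moreover have "mrank M (\<sigma> ` J) \<le> card (\<sigma> ` J)"
      using rank_le_card finite_imageI[OF assms(1)] by blast
    ultimately have "card (\<sigma> ` J) = card J" using r c by linarith
    thus "inj_on \<sigma> J \<and> mrank M (\<sigma> ` J) = card (\<sigma> ` J)"
      using eq_card_imp_inj_on[OF assms(1)] r \<open>mrank M J = card J\<close> by simp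
  next
    assume "inj_on \<sigma> J \<and> mrank M (\<sigma> ` J) = card (\<sigma> ` J)"
    thus "mrank M J = card J" using r card_image by metis
  qed
  also have "\<dots> \<longleftrightarrow> inj_on \<sigma> J \<and> ind M (\<sigma> ` J)"
    using ind_iff_rank_eq_card[OF finite_imageI[OF assms(1)]] by blast
  finally show ?thesis using True by blast
next
  case False
  then show ?thesis using ind_subset by blast
qed

text \<open>Extending a basis of X to a basis of Y \<union> X yields a set I \<subseteq> Y that is independent
  in M/X and has the size r(Y \<union> X) - r(X).\<close>
lemma contract_basis_exists:
  "\<exists>I\<subseteq>Y. mrank M (I \<union> X) = card I + mrank M X \<and> card I = mrank M (Y \<union> X) - mrank M X"
proof -
  obtain BX where BX: "BX \<subseteq> X" "ind M BX" "card BX = mrank M X"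
    using basis_exists by blast
  obtain B where B: "BX \<subseteq> B" "B \<subseteq> Y \<union> X" "ind M B" "card B = mrank M (Y \<union> X)"
    using basis_extend[OF BX(2), of "Y \<union> X"] BX(1) by blast
  define I where "I = B - X"
  have fB: "finite B" using ind_finite[OF B(3)] .
  have "B = I \<union> (B \<inter> X)" "I \<inter> (B \<inter> X) = {}" using I_def by blast+
  hence c1: "card B = card I + card (B \<inter> X)" using fB card_Un_disjoint[of I "B \<inter> X"] by (metis finite_Un)
  have "BX \<subseteq> B \<inter> X" using B(1) BX(1) by blast
  hence c2: "card BX \<le> card (B \<inter> X)" using fB by (simp add: card_mono)
  have "B \<subseteq> I \<union> X" unfolding I_def by blast
  hence c3: "card B \<le> mrank M (I \<union> X)" using card_le_rank[OF B(3)] by blast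
  have c4: "mrank M (I \<union> X) \<le> mrank M X + card I"
    using rank_union_le[of I X] fB unfolding I_def by (simp add: Un_commute)
  have "I \<subseteq> Y" using B(2) I_def by blast
  moreover have "mrank M (I \<union> X) = card I + mrank M X" "card I = mrank M (Y \<union> X) - mrank M X"
    using c1 c2 c3 c4 BX(3) B(4) by linarith+
  ultimately show ?thesis by blast
qed

lemma rank_contract:
  assumes Y: "Y \<subseteq> gr M - X"
  shows "mrank (contract M X) Y = mrank M (Y \<union> X) - mrank M X"
proof -
  let ?K = "{card I |I. I \<subseteq> Y \<and> mrank M (I \<union> X) = card I + mrank M X}"
  have K: "{card I |I. I \<subseteq> Y \<and> ind (contract M X) I} = ?K" using Y by auto
  have "finite Y" using Y finite_ground finite_subset by blast
  moreover have "?K \<subseteq> card ` Pow Y" by blast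
  ultimately have fK: "finite ?K" using finite_subset by blast
  have "Max ?K = mrank M (Y \<union> X) - mrank M X"
  proof (rule Max_eqI[OF fK])
    fix y assume "y \<in> ?K"
    then obtain J where J: "y = card J" "J \<subseteq> Y" "mrank M (J \<union> X) = card J + mrank M X"
      by blast
    have "mrank M (J \<union> X) \<le> mrank M (Y \<union> X)" using J(2) by (intro rank_mono) blast
    thus "y \<le> mrank M (Y \<union> X) - mrank M X" using J by linarith
  next
    show "mrank M (Y \<union> X) - mrank M X \<in> ?K"
      using contract_basis_exists[of Y X] by (metis (mono_tags, lifting) mem_Collect_eq)
  qed
  thus ?thesis unfolding mrank_def[of "contract M X"] K .
qed

text \<open>For X disjoint from T, the drop r(T \<union> X) - r(T) is antitone in T (submodularity);
  for sets disjoint from X this drop is r(X) minus the local connectivity with X.\<close>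
lemma rank_drop_antitone:
  assumes "U \<subseteq> T" "T \<inter> X = {}"
  shows "mrank M (T \<union> X) + mrank M U \<le> mrank M (U \<union> X) + mrank M T"
proof -
  have "(U \<union> X) \<union> T = T \<union> X" "(U \<union> X) \<inter> T = U" using assms by blast+
  thus ?thesis using rank_submod[of "U \<union> X" T] by simp
qed

text \<open>If the drop is the same for U and for a superset T0, then X is irrelevant when contracting
  U \<union> X instead of U from sets inside T0.\<close>
lemma contract_skew_equiv:
  assumes UT: "U \<subseteq> T0" and TX: "T0 \<inter> X = {}" and IT: "I \<subseteq> T0"
    and drop_eq: "mrank M (T0 \<union> X) - mrank M T0 = mrank M (U \<union> X) - mrank M U"
  shows "mrank M (I \<union> U \<union> X) = card I + mrank M (U \<union> X)
     \<longleftrightarrow> mrank M (I \<union> U) = card I + mrank M U"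
proof -
  define T where "T = I \<union> U"
  have d1: "mrank M (T \<union> X) + mrank M U \<le> mrank M (U \<union> X) + mrank M T"
    by (rule rank_drop_antitone) (use T_def TX UT IT in auto)
  have d2: "mrank M (T0 \<union> X) + mrank M T \<le> mrank M (T \<union> X) + mrank M T0"
    by (rule rank_drop_antitone) (use T_def TX UT IT in auto)
  have "mrank M T \<le> mrank M (T \<union> X)" "mrank M U \<le> mrank M (U \<union> X)"
    "mrank M T0 \<le> mrank M (T0 \<union> X)" by (rule rank_mono, blast)+
  with d1 d2 drop_eq show ?thesis unfolding T_def by linarith
qed

lemma contract_basis_equiv:
  assumes B: "B \<subseteq> U" "ind M B" "card B = mrank M U"
    and "finite I" "I \<inter> U = {}"
  shows "mrank M (I \<union> U) = card I + mrank M U \<longleftrightarrow> ind M (I \<union> B)"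
proof -
  have "card (I \<union> B) = card I + mrank M U"
    using card_Un_disjoint[OF assms(4) ind_finite[OF B(2)]] assms(5) B by auto
  moreover have "mrank M (I \<union> U) = mrank M (I \<union> B)" using rank_union_basis[OF B] .
  ultimately show ?thesis
    using ind_iff_rank_eq_card[of "I \<union> B"] assms(4) ind_finite[OF B(2)] by simp
qed

end

section \<open>Linear independence of vector families\<close>

lemma lin_indepI:
  assumes "\<And>c. \<forall>e\<in>I. c e \<in> carrier R \<Longrightarrow> \<forall>i<k. finsum R (\<lambda>e. c e \<otimes>\<^bsub>R\<^esub> v e i) I = \<zero>\<^bsub>R\<^esub>
     \<Longrightarrow> \<forall>e\<in>I. c e = \<zero>\<^bsub>R\<^esub>"
  shows "lin_indep R k v I"
  using assms unfolding lin_indep_def by blast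

lemma lin_indepD:
  assumes "lin_indep R k v I" "\<forall>e\<in>I. c e \<in> carrier R"
    "\<forall>i<k. finsum R (\<lambda>e. c e \<otimes>\<^bsub>R\<^esub> v e i) I = \<zero>\<^bsub>R\<^esub>" "e \<in> I"
  shows "c e = \<zero>\<^bsub>R\<^esub>"
  using assms unfolding lin_indep_def by blast

context field
begin

lemma vecs_carrier: "x \<in> vecs R k \<Longrightarrow> i < k \<Longrightarrow> x i \<in> carrier R"
  by (simp add: vecs_def)

lemma vecs_zero: "x \<in> vecs R k \<Longrightarrow> k \<le> i \<Longrightarrow> x i = \<zero>"
  by (simp add: vecs_def)

lemma zvec_vecs: "zvec R \<in> vecs R k"
  by (simp add: zvec_def vecs_def)

lemma coord_sum_closed:
  "\<lbrakk>\<forall>e\<in>I. c e \<in> carrier R; \<forall>e\<in>I. v e \<in> vecs R k; i < k\<rbrakk>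
   \<Longrightarrow> finsum R (\<lambda>e. c e \<otimes> v e i) I \<in> carrier R"
  by (intro finsum_closed) (auto simp: vecs_def)

text \<open>Subfamilies of independent families are independent (pad coefficients by zero).\<close>
lemma lin_indep_subset:
  assumes "finite J" "I \<subseteq> J" "\<forall>e\<in>J. v e \<in> vecs R k" "lin_indep R k v J"
  shows "lin_indep R k v I"
  unfolding lin_indep_def
proof (intro allI impI)
  fix c assume c: "(\<forall>e\<in>I. c e \<in> carrier R) \<and> (\<forall>i<k. finsum R (\<lambda>e. c e \<otimes> v e i) I = \<zero>)"
  define c' where "c' = (\<lambda>e. if e \<in> I then c e else \<zero>)"
  have c'_carrier: "\<forall>e\<in>J. c' e \<in> carrier R" using c c'_def by auto
  have "finsum R (\<lambda>e. c' e \<otimes> v e i) J = \<zero>" if "i < k" for i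
  proof -
    have "finsum R (\<lambda>e. c e \<otimes> v e i) I = finsum R (\<lambda>e. c' e \<otimes> v e i) J"
      by (rule add.finprod_mono_neutral_cong_left[OF assms(1,2)])
         (use assms(2,3) that c'_carrier c in \<open>auto simp: c'_def vecs_def\<close>)
    thus ?thesis using c that by simp
  qed
  hence c'_zero: "c' e = \<zero>" if "e \<in> J" for e using lin_indepD[OF assms(4) c'_carrier] that by blast
  show "\<forall>e\<in>I. c e = \<zero>"
  proof
    fix e assume "e \<in> I"
    thus "c e = \<zero>" using c'_zero[of e] assms(2) c'_def by auto
  qed
qed

lemma not_lin_indep_zero:
  assumes "finite I" "e \<in> I" "\<forall>i<k. v e i = \<zero>" "\<forall>x\<in>I. v x \<in> vecs R k"
  shows "\<not> lin_indep R k v I"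
proof
  assume L: "lin_indep R k v I"
  define c where "c = (\<lambda>x. if x = e then \<one> else \<zero>)"
  have "\<forall>i<k. finsum R (\<lambda>x. c x \<otimes> v x i) I = \<zero>"
    using assms by (intro allI impI add.finprod_one_eqI) (auto simp: c_def vecs_def)
  moreover have "\<forall>x\<in>I. c x \<in> carrier R" by (simp add: c_def)
  ultimately have "c e = \<zero>" using lin_indepD[OF L] assms(2) by blast
  thus False using c_def by simp
qed

lemma lin_indep_single_nonzero:
  assumes "v b \<in> vecs R k" "lin_indep R k v {b}"
  shows "\<exists>j<k. v b j \<noteq> \<zero>"
  using not_lin_indep_zero[of "{b}" b k v] assms by auto

lemma not_lin_indep_repeat:
  assumes "finite I" "e1 \<in> I" "e2 \<in> I" "e1 \<noteq> e2" "v e1 = v e2" "\<forall>x\<in>I. v x \<in> vecs R k"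
  shows "\<not> lin_indep R k v I"
proof
  assume L: "lin_indep R k v I"
  define c where "c = (\<lambda>x. if x = e1 then \<one> else if x = e2 then \<ominus> \<one> else \<zero>)"
  have "finsum R (\<lambda>x. c x \<otimes> v x i) I = \<zero>" if "i < k" for i
  proof -
    define J where "J = I - {e1, e2}"
    have I_eq: "I = insert e1 (insert e2 J)" using assms J_def by auto
    have v1: "v e1 i \<in> carrier R" using assms that vecs_carrier by blast
    have "finsum R (\<lambda>x. c x \<otimes> v x i) J = \<zero>"
      using assms(6) that J_def by (intro add.finprod_one_eqI) (auto simp: c_def vecs_def)
    moreover have "(\<lambda>x. c x \<otimes> v x i) \<in> J \<rightarrow> carrier R"
      using assms(6) that J_def by (auto simp: c_def vecs_def)
    ultimately have "finsum R (\<lambda>x. c x \<otimes> v x i) I = v e1 i \<oplus> (\<ominus> v e1 i \<oplus> \<zero>)"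
      unfolding I_eq using assms(1,4,5) v1 J_def by (simp add: finsum_insert c_def l_minus)
    thus ?thesis using v1 by (simp add: r_neg)
  qed
  moreover have "\<forall>x\<in>I. c x \<in> carrier R" by (simp add: c_def)
  ultimately have "c e1 = \<zero>" using lin_indepD[OF L] assms(2) by blast
  thus False using c_def by simp
qed

lemma lin_indep_cong:
  assumes "\<forall>e\<in>I. v e = v' e" "\<forall>e\<in>I. v e \<in> vecs R k"
  shows "lin_indep R k v I = lin_indep R k v' I"
proof -
  have "finsum R (\<lambda>e. c e \<otimes> v e i) I = finsum R (\<lambda>e. c e \<otimes> v' e i) I"
    if "\<forall>e\<in>I. c e \<in> carrier R" "i < k" for c i
    using assms that by (intro add.finprod_cong') (auto simp: vecs_def)
  hence "(\<forall>i<k. finsum R (\<lambda>e. c e \<otimes> v e i) I = \<zero>)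
      \<longleftrightarrow> (\<forall>i<k. finsum R (\<lambda>e. c e \<otimes> v' e i) I = \<zero>)"
    if "\<forall>e\<in>I. c e \<in> carrier R" for c
    using that by simp
  thus ?thesis unfolding lin_indep_def by blast
qed

lemma lin_indep_reindex:
  assumes inj: "inj_on g I" and w: "\<forall>y\<in>g ` I. w y \<in> vecs R k"
  shows "lin_indep R k (\<lambda>e. w (g e)) I \<longleftrightarrow> lin_indep R k w (g ` I)"
proof -
  have sum_eq: "finsum R (\<lambda>y. c y \<otimes> w y i) (g ` I) = finsum R (\<lambda>e. c (g e) \<otimes> w (g e) i) I"
    if "\<forall>y\<in>g ` I. c y \<in> carrier R" "i < k" for c i
    using that w inj by (intro finsum_reindex) (auto simp: vecs_def)
  show ?thesis
  proof
    assume L: "lin_indep R k (\<lambda>e. w (g e)) I"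
    show "lin_indep R k w (g ` I)"
    proof (rule lin_indepI)
      fix c assume c: "\<forall>y\<in>g ` I. c y \<in> carrier R"
        and sums: "\<forall>i<k. finsum R (\<lambda>y. c y \<otimes> w y i) (g ` I) = \<zero>"
      have "\<forall>i<k. finsum R (\<lambda>e. c (g e) \<otimes> w (g e) i) I = \<zero>" using sum_eq[OF c] sums by simp
      hence "c (g e) = \<zero>" if "e \<in> I" for e
        using lin_indepD[OF L, of "\<lambda>e. c (g e)"] c that by blast
      thus "\<forall>y\<in>g ` I. c y = \<zero>" by blast
    qed
  next
    assume L: "lin_indep R k w (g ` I)"
    show "lin_indep R k (\<lambda>e. w (g e)) I"
    proof (rule lin_indepI)
      fix c assume c: "\<forall>e\<in>I. c e \<in> carrier R"
        and sums: "\<forall>i<k. finsum R (\<lambda>e. c e \<otimes> w (g e) i) I = \<zero>"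
      define c' where "c' = (\<lambda>y. c (the_inv_into I g y))"
      have c'_g: "\<forall>e\<in>I. c' (g e) = c e" using the_inv_into_f_f[OF inj] c'_def by simp
      have c'_carrier: "\<forall>y\<in>g ` I. c' y \<in> carrier R" using c'_g c by auto
      have "finsum R (\<lambda>y. c' y \<otimes> w y i) (g ` I) = \<zero>" if i: "i < k" for i
      proof -
        have "finsum R (\<lambda>y. c' y \<otimes> w y i) (g ` I) = finsum R (\<lambda>e. c e \<otimes> w (g e) i) I"
          unfolding sum_eq[OF c'_carrier i]
          using c'_g c w i by (intro add.finprod_cong') (auto simp: vecs_def)
        thus ?thesis using sums i by simp
      qed
      hence "\<forall>y\<in>g ` I. c' y = \<zero>" using lin_indepD[OF L c'_carrier] by blast
      thus "\<forall>e\<in>I. c e = \<zero>" using c'_g by auto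
    qed
  qed
qed

lemma lin_indep_scale:
  assumes a: "\<forall>L\<in>T. a L \<in> carrier R \<and> a L \<noteq> \<zero>"
    and w: "\<forall>L\<in>T. w L = vsmult R k (a L) (u L)"
    and u: "\<forall>L\<in>T. u L \<in> vecs R k" and L: "lin_indep R k u T"
  shows "lin_indep R k w T"
proof (rule lin_indepI)
  fix d assume d: "\<forall>L\<in>T. d L \<in> carrier R"
    and sums: "\<forall>i<k. finsum R (\<lambda>L. d L \<otimes> w L i) T = \<zero>"
  have "finsum R (\<lambda>L. (d L \<otimes> a L) \<otimes> u L i) T = \<zero>" if i: "i < k" for i
  proof -
    have "finsum R (\<lambda>L. (d L \<otimes> a L) \<otimes> u L i) T = finsum R (\<lambda>L. d L \<otimes> w L i) T"
      using a d w u i by (intro add.finprod_cong') (auto simp: vecs_def vsmult_def m_assoc)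
    thus ?thesis using sums i by simp
  qed
  moreover have "\<forall>L\<in>T. d L \<otimes> a L \<in> carrier R" using a d by simp
  ultimately have "d L \<otimes> a L = \<zero>" if "L \<in> T" for L
    using lin_indepD[OF L, of "\<lambda>L. d L \<otimes> a L"] that by blast
  thus "\<forall>L\<in>T. d L = \<zero>" using integral a d by blast
qed

end

section \<open>Contraction by Gaussian elimination\<close>

definition elim :: "('f, 'm) ring_scheme \<Rightarrow> nat \<Rightarrow> (nat \<Rightarrow> 'f) \<Rightarrow> (nat \<Rightarrow> 'f) \<Rightarrow> (nat \<Rightarrow> 'f)" where
  "elim R j u x = (\<lambda>i. x i \<ominus>\<^bsub>R\<^esub> (x j \<otimes>\<^bsub>R\<^esub> inv\<^bsub>R\<^esub> (u j)) \<otimes>\<^bsub>R\<^esub> u i)"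

lemma (in cring) elim_sum_step:
  assumes "a \<in> carrier R" "b \<in> carrier R" "d \<in> carrier R" "y \<in> carrier R" "z \<in> carrier R"
    "s \<in> carrier R" "t \<in> carrier R"
  shows "a \<otimes> (b \<ominus> (d \<otimes> y) \<otimes> z) \<oplus> (s \<ominus> t \<otimes> (y \<otimes> z)) = (a \<otimes> b \<oplus> s) \<ominus> (a \<otimes> d \<oplus> t) \<otimes> (y \<otimes> z)"
  using assms by algebra

lemma (in cring) elim_pivot_cancel:
  assumes "c \<in> carrier R" "x \<in> carrier R" "y \<in> carrier R" "z \<in> carrier R"
  shows "\<ominus> (c \<otimes> x) \<ominus> (\<ominus> (c \<otimes> y)) \<otimes> (z \<otimes> x) = c \<otimes> x \<otimes> (y \<otimes> z) \<ominus> c \<otimes> x"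
  using assms by algebra

lemma (in cring) elim_pivot_coeff:
  assumes "s \<in> carrier R" "t \<in> carrier R" "x \<in> carrier R" "z \<in> carrier R"
  shows "\<ominus> (s \<otimes> z) \<otimes> x \<oplus> t = t \<ominus> s \<otimes> (z \<otimes> x)"
  using assms by algebra

context field
begin

lemma elim_vecs:
  assumes "x \<in> vecs R k" "u \<in> vecs R k" "j < k" "u j \<in> Units R"
  shows "elim R j u x \<in> vecs R k"
proof -
  have inv: "inv (u j) \<in> carrier R" using assms(4) by simp
  have xj: "x j \<in> carrier R" using assms vecs_carrier by blast
  show ?thesis unfolding vecs_def elim_def
  proof (intro CollectI conjI allI impI)
    fix i assume "i < k"
    thus "x i \<ominus> x j \<otimes> inv u j \<otimes> u i \<in> carrier R" using assms inv xj vecs_carrier by simp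
  next
    fix i assume "k \<le> i"
    hence "x i = \<zero>" "u i = \<zero>" using vecs_zero[OF assms(1)] vecs_zero[OF assms(2)] by auto
    thus "x i \<ominus> x j \<otimes> inv u j \<otimes> u i = \<zero>" using inv xj by (simp add: minus_eq)
  qed
qed

lemma coord_sum_elim:
  assumes "finite I" "\<forall>e\<in>I. c e \<in> carrier R" "\<forall>e\<in>I. v e \<in> vecs R k" "u \<in> vecs R k"
    "j < k" "i < k" "u j \<in> Units R"
  shows "finsum R (\<lambda>e. c e \<otimes> elim R j u (v e) i) I
       = finsum R (\<lambda>e. c e \<otimes> v e i) I \<ominus> finsum R (\<lambda>e. c e \<otimes> v e j) I \<otimes> (inv (u j) \<otimes> u i)"
  using assms(1,2,3)
proof (induction I rule: finite_induct)
  case empty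
  have "inv (u j) \<in> carrier R" "u i \<in> carrier R" using assms vecs_carrier by auto
  then show ?case by (simp add: minus_eq)
next
  case (insert a I)
  have u: "inv (u j) \<in> carrier R" "u i \<in> carrier R" using assms vecs_carrier by auto
  have a: "c a \<in> carrier R" "v a i \<in> carrier R" "v a j \<in> carrier R"
    using insert assms vecs_carrier by auto
  have f1: "(\<lambda>e. c e \<otimes> elim R j u (v e) i) \<in> I \<rightarrow> carrier R"
    using insert assms u vecs_carrier by (auto simp: elim_def)
  have f2: "(\<lambda>e. c e \<otimes> v e i) \<in> I \<rightarrow> carrier R"
    and f3: "(\<lambda>e. c e \<otimes> v e j) \<in> I \<rightarrow> carrier R"
    using insert assms vecs_carrier by auto
  define si where "si = finsum R (\<lambda>e. c e \<otimes> v e i) I"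
  define sj where "sj = finsum R (\<lambda>e. c e \<otimes> v e j) I"
  have s: "si \<in> carrier R" "sj \<in> carrier R" using f2 f3 si_def sj_def by simp_all
  have "finsum R (\<lambda>e. c e \<otimes> elim R j u (v e) i) (insert a I)
      = c a \<otimes> elim R j u (v a) i \<oplus> finsum R (\<lambda>e. c e \<otimes> elim R j u (v e) i) I"
    using insert f1 a u by (intro finsum_insert) (auto simp: elim_def)
  also have "\<dots> = c a \<otimes> (v a i \<ominus> (v a j \<otimes> inv (u j)) \<otimes> u i) \<oplus> (si \<ominus> sj \<otimes> (inv (u j) \<otimes> u i))"
    using insert si_def sj_def by (simp add: elim_def)
  also have "\<dots> = (c a \<otimes> v a i \<oplus> si) \<ominus> (c a \<otimes> v a j \<oplus> sj) \<otimes> (inv (u j) \<otimes> u i)"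
    using elim_sum_step[OF a u s] .
  also have "\<dots> = finsum R (\<lambda>e. c e \<otimes> v e i) (insert a I)
      \<ominus> finsum R (\<lambda>e. c e \<otimes> v e j) (insert a I) \<otimes> (inv (u j) \<otimes> u i)"
    using insert f2 f3 a si_def sj_def by simp
  finally show ?case .
qed

lemma lin_indep_insert_of_elim:
  assumes I: "finite I" "b \<notin> I" and v: "\<forall>e\<in>insert b I. v e \<in> vecs R k"
    and j: "j < k" "v b j \<noteq> \<zero>"
    and L: "lin_indep R k (\<lambda>e. elim R j (v b) (v e)) I"
  shows "lin_indep R k v (insert b I)"
proof (rule lin_indepI)
  fix c
  assume c: "\<forall>e\<in>insert b I. c e \<in> carrier R"
    and sums: "\<forall>i<k. finsum R (\<lambda>e. c e \<otimes> v e i) (insert b I) = \<zero>"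
  define u where "u = v b"
  have u: "u \<in> vecs R k" using v u_def by simp
  have uj: "u j \<in> carrier R" "u j \<in> Units R" "inv (u j) \<in> carrier R" "u j \<otimes> inv (u j) = \<one>"
    using u j vecs_carrier field_Units u_def by auto
  have vI: "\<forall>e\<in>I. v e \<in> vecs R k" using v by simp
  have cI: "\<forall>e\<in>I. c e \<in> carrier R" using c by simp
  have sum_I: "finsum R (\<lambda>e. c e \<otimes> v e i) I = \<ominus> (c b \<otimes> u i)" if i: "i < k" for i
  proof -
    have ui: "u i \<in> carrier R" using u i vecs_carrier by blast
    have s: "finsum R (\<lambda>e. c e \<otimes> v e i) I \<in> carrier R" using coord_sum_closed[OF cI vI i] .
    have "c b \<otimes> u i \<oplus> finsum R (\<lambda>e. c e \<otimes> v e i) I = \<zero>"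
      using sums i I c v u_def by (simp add: finsum_insert vecs_def)
    thus ?thesis using s c ui by (metis a_comm insertI1 m_closed minus_equality)
  qed
  have "finsum R (\<lambda>e. c e \<otimes> elim R j u (v e) i) I = \<zero>" if i: "i < k" for i
  proof -
    have ui: "u i \<in> carrier R" using u i vecs_carrier by blast
    have cb: "c b \<in> carrier R" using c by simp
    have "finsum R (\<lambda>e. c e \<otimes> elim R j u (v e) i) I
        = \<ominus> (c b \<otimes> u i) \<ominus> (\<ominus> (c b \<otimes> u j)) \<otimes> (inv (u j) \<otimes> u i)"
      using coord_sum_elim[OF I(1) cI vI u j(1) i uj(2)] sum_I i j by simp
    also have "\<dots> = c b \<otimes> u i \<otimes> (u j \<otimes> inv (u j)) \<ominus> c b \<otimes> u i"
      using elim_pivot_cancel[OF cb ui uj(1) uj(3)] .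
    also have "\<dots> = \<zero>" using uj cb ui by (simp add: minus_eq r_neg)
    finally show ?thesis .
  qed
  hence c_I: "\<forall>e\<in>I. c e = \<zero>" using lin_indepD[OF L[folded u_def] cI] by blast
  hence "finsum R (\<lambda>e. c e \<otimes> v e j) I = \<zero>"
    using vI j by (intro add.finprod_one_eqI) (auto simp: vecs_def)
  hence "c b \<otimes> u j = \<zero>" using sum_I[OF j(1)] c uj by (metis insertI1 m_closed minus_minus minus_zero)
  hence "c b = \<zero>" using integral c uj j(2) u_def by blast
  thus "\<forall>e\<in>insert b I. c e = \<zero>" using c_I by simp
qed

lemma lin_indep_elim_of_insert:
  assumes I: "finite I" "b \<notin> I" and v: "\<forall>e\<in>insert b I. v e \<in> vecs R k"
    and j: "j < k" "v b j \<noteq> \<zero>"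
    and L: "lin_indep R k v (insert b I)"
  shows "lin_indep R k (\<lambda>e. elim R j (v b) (v e)) I"
proof (rule lin_indepI)
  fix c
  assume cI: "\<forall>e\<in>I. c e \<in> carrier R"
    and sums: "\<forall>i<k. finsum R (\<lambda>e. c e \<otimes> elim R j (v b) (v e) i) I = \<zero>"
  define u where "u = v b"
  have u: "u \<in> vecs R k" using v u_def by simp
  have uj: "u j \<in> carrier R" "u j \<in> Units R" "inv (u j) \<in> carrier R"
    using u j vecs_carrier field_Units u_def by auto
  have vI: "\<forall>e\<in>I. v e \<in> vecs R k" using v by simp
  define sj where "sj = finsum R (\<lambda>e. c e \<otimes> v e j) I"
  have sj: "sj \<in> carrier R" using coord_sum_closed[OF cI vI j(1)] sj_def by simp
  txt \<open>Extend the coefficients by the pivot coefficient that cancels coordinate j.\<close>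
  define c' where "c' = c(b := \<ominus> (sj \<otimes> inv (u j)))"
  have c'_carrier: "\<forall>e\<in>insert b I. c' e \<in> carrier R" using cI sj uj c'_def by simp
  have c'_I: "\<forall>e\<in>I. c' e = c e" using I(2) c'_def by auto
  have "finsum R (\<lambda>e. c' e \<otimes> v e i) (insert b I) = \<zero>" if i: "i < k" for i
  proof -
    have ui: "u i \<in> carrier R" using u i vecs_carrier by blast
    have si: "finsum R (\<lambda>e. c e \<otimes> v e i) I \<in> carrier R" using coord_sum_closed[OF cI vI i] .
    have "finsum R (\<lambda>e. c' e \<otimes> v e i) (insert b I) = c' b \<otimes> v b i \<oplus> finsum R (\<lambda>e. c' e \<otimes> v e i) I"
      using I c'_carrier v i by (intro finsum_insert) (auto simp: vecs_def)
    also have "finsum R (\<lambda>e. c' e \<otimes> v e i) I = finsum R (\<lambda>e. c e \<otimes> v e i) I"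
      using c'_I cI vI i by (intro add.finprod_cong') (auto simp: vecs_def)
    also have "c' b \<otimes> v b i = \<ominus> (sj \<otimes> inv (u j)) \<otimes> u i" using c'_def u_def by simp
    also have "\<ominus> (sj \<otimes> inv (u j)) \<otimes> u i \<oplus> finsum R (\<lambda>e. c e \<otimes> v e i) I
        = finsum R (\<lambda>e. c e \<otimes> v e i) I \<ominus> sj \<otimes> (inv (u j) \<otimes> u i)"
      using elim_pivot_coeff[OF sj si ui uj(3)] .
    also have "\<dots> = finsum R (\<lambda>e. c e \<otimes> elim R j u (v e) i) I"
      using coord_sum_elim[OF I(1) cI vI u j(1) i uj(2)] sj_def by simp
    also have "\<dots> = \<zero>" using sums i u_def by simp
    finally show ?thesis .
  qed
  hence "\<forall>e\<in>insert b I. c' e = \<zero>" using lin_indepD[OF L c'_carrier] by blast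
  thus "\<forall>e\<in>I. c e = \<zero>" using c'_I by simp
qed

text \<open>Linear-algebra form of contraction: for an independent family B there are vectors
  on any disjoint finite D whose independence on I \<subseteq> D is that of I \<union> B, obtained by
  eliminating the elements of B one at a time.\<close>
lemma lin_indep_contract:
  assumes "finite B"
  shows "\<lbrakk>finite D; B \<inter> D = {}; \<forall>e\<in>B \<union> D. v e \<in> vecs R k; lin_indep R k v B\<rbrakk>
    \<Longrightarrow> \<exists>w. (\<forall>e\<in>D. w e \<in> vecs R k) \<and> (\<forall>I\<subseteq>D. lin_indep R k w I \<longleftrightarrow> lin_indep R k v (I \<union> B))"
  using assms
proof (induction B arbitrary: D rule: finite_induct)
  case empty
  then show ?case by (intro exI[of _ v]) auto
next
  case (insert b B)
  have "lin_indep R k v B"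
    by (rule lin_indep_subset[OF _ _ _ insert.prems(4)]) (use insert in auto)
  then obtain w' where w': "\<forall>e\<in>insert b D. w' e \<in> vecs R k"
    "\<forall>I\<subseteq>insert b D. lin_indep R k w' I \<longleftrightarrow> lin_indep R k v (I \<union> B)"
    using insert.IH[of "insert b D"] insert.prems insert.hyps by auto
  have "lin_indep R k w' {b}" using w'(2) insert.prems(4) by (metis Un_insert_left
        empty_subsetI insert_subset insertI1 sup_bot_left)
  then obtain j where j: "j < k" "w' b j \<noteq> \<zero>"
    using lin_indep_single_nonzero[of w' b k] w'(1) by blast
  have U: "w' b j \<in> Units R" using vecs_carrier w'(1) j field_Units by auto
  define w where "w = (\<lambda>e. elim R j (w' b) (w' e))"
  have "\<forall>e\<in>D. w e \<in> vecs R k"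
    unfolding w_def using elim_vecs[of _ k "w' b" j] j(1) U w'(1) by blast
  moreover have "lin_indep R k w I \<longleftrightarrow> lin_indep R k v (I \<union> insert b B)" if ID: "I \<subseteq> D" for I
  proof -
    have I: "finite I" "b \<notin> I" using ID insert.prems(1,2) finite_subset by auto
    have w'I: "\<forall>e\<in>insert b I. w' e \<in> vecs R k" using w'(1) ID by auto
    have "lin_indep R k w I \<longleftrightarrow> lin_indep R k w' (insert b I)"
      unfolding w_def using lin_indep_insert_of_elim[OF I w'I j] lin_indep_elim_of_insert[OF I w'I j]
      by blast
    also have "\<dots> \<longleftrightarrow> lin_indep R k v (insert b I \<union> B)" using w'(2) ID by blast
    finally show ?thesis by simp
  qed
  ultimately show ?case by blast
qed

end

section \<open>Projective geometries\<close>

definition point_vec :: "('f, 'm) ring_scheme \<Rightarrow> nat \<Rightarrow> (nat \<Rightarrow> 'f) set \<Rightarrow> (nat \<Rightarrow> 'f)" where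
  "point_vec R k L = (SOME x. x \<in> vecs R k \<and> x \<noteq> zvec R \<and> L = vline R k x)"

lemma gr_PG: "gr (PG_matroid R k) = {vline R k x |x. x \<in> vecs R k \<and> x \<noteq> zvec R}"
  by (simp add: PG_matroid_def gr_def)

lemma ind_PG: "ind (PG_matroid R k) T \<longleftrightarrow> T \<subseteq> gr (PG_matroid R k) \<and>
   (\<forall>w. (\<forall>L\<in>T. w L \<in> L \<and> w L \<noteq> zvec R) \<longrightarrow> lin_indep R k w T)"
  by (simp add: PG_matroid_def gr_def ind_def)

lemma point_vec:
  assumes "L \<in> gr (PG_matroid R k)"
  shows "point_vec R k L \<in> vecs R k \<and> point_vec R k L \<noteq> zvec R \<and> L = vline R k (point_vec R k L)"
proof -
  obtain x where "x \<in> vecs R k \<and> x \<noteq> zvec R \<and> L = vline R k x"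
    using assms unfolding gr_PG by blast
  thus ?thesis unfolding point_vec_def
    by (rule someI[where P = "\<lambda>x. x \<in> vecs R k \<and> x \<noteq> zvec R \<and> L = vline R k x"])
qed

context field
begin

lemma in_vline: "x \<in> vecs R k \<Longrightarrow> x \<in> vline R k x"
proof -
  assume "x \<in> vecs R k"
  hence "vsmult R k \<one> x = x" by (intro ext) (auto simp: vsmult_def vecs_def)
  thus "x \<in> vline R k x" unfolding vline_def by force
qed

lemma vline_nonzero_multiple:
  assumes "x \<in> vecs R k" "y \<in> vline R k x" "y \<noteq> zvec R"
  shows "\<exists>a. a \<in> carrier R \<and> a \<noteq> \<zero> \<and> y = vsmult R k a x"
proof -
  obtain a where a: "a \<in> carrier R" "y = vsmult R k a x" using assms(2) unfolding vline_def by blast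
  have "a \<noteq> \<zero>"
  proof
    assume "a = \<zero>"
    hence "y = zvec R" using a assms(1) by (auto simp: vsmult_def zvec_def vecs_def)
    thus False using assms(3) by simp
  qed
  thus ?thesis using a by blast
qed

text \<open>Independence in PG(k-1,R) is linear independence of the chosen spanning vectors:
  any other choice of nonzero vectors on the lines differs by nonzero scalars.\<close>
lemma ind_PG_iff_lin_indep:
  assumes T: "T \<subseteq> gr (PG_matroid R k)"
  shows "ind (PG_matroid R k) T \<longleftrightarrow> lin_indep R k (point_vec R k) T"
proof
  assume "ind (PG_matroid R k) T"
  hence H: "\<forall>w. (\<forall>L\<in>T. w L \<in> L \<and> w L \<noteq> zvec R) \<longrightarrow> lin_indep R k w T"
    by (simp add: ind_PG)
  have "point_vec R k L \<in> L \<and> point_vec R k L \<noteq> zvec R" if "L \<in> T" for L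
  proof -
    have "point_vec R k L \<in> vecs R k \<and> point_vec R k L \<noteq> zvec R \<and> L = vline R k (point_vec R k L)"
      using point_vec T that by blast
    thus ?thesis using in_vline by metis
  qed
  thus "lin_indep R k (point_vec R k) T" using H by blast
next
  assume L: "lin_indep R k (point_vec R k) T"
  have "lin_indep R k w T" if w: "\<forall>L\<in>T. w L \<in> L \<and> w L \<noteq> zvec R" for w
  proof -
    have "\<exists>a. a \<in> carrier R \<and> a \<noteq> \<zero> \<and> w L = vsmult R k a (point_vec R k L)" if "L \<in> T" for L
    proof -
      have p: "point_vec R k L \<in> vecs R k \<and> L = vline R k (point_vec R k L)"
        using point_vec T that by blast
      hence "w L \<in> vline R k (point_vec R k L)" using w that by metis
      thus ?thesis using vline_nonzero_multiple p w that by blast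
    qed
    then obtain a where
      a: "\<forall>L\<in>T. a L \<in> carrier R \<and> a L \<noteq> \<zero> \<and> w L = vsmult R k (a L) (point_vec R k L)"
      by metis
    moreover have "\<forall>L\<in>T. point_vec R k L \<in> vecs R k" using point_vec T by blast
    ultimately show ?thesis using lin_indep_scale[where a = a and u = "point_vec R k"] L by blast
  qed
  thus "ind (PG_matroid R k) T" using T by (simp add: ind_PG)
qed

end

definition represents ::
  "('f, 'm) ring_scheme \<Rightarrow> nat \<Rightarrow> ('a \<Rightarrow> nat \<Rightarrow> 'f) \<Rightarrow> 'a matroid \<Rightarrow> 'a set \<Rightarrow> bool" where
  "represents R k v M A \<longleftrightarrow> (\<forall>e\<in>A. v e \<in> vecs R k) \<and> (\<forall>I\<subseteq>A. ind M I \<longleftrightarrow> lin_indep R k v I)"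

lemma representableI:
  fixes R :: "nat ring"
  assumes "field R" "finite (carrier R)" "card (carrier R) = q" "represents R k v N (gr N)"
  shows "representable q N"
  using assms unfolding representable_def represents_def by blast

lemma represents_cong:
  assumes "represents R k v N A" "\<forall>I\<subseteq>A. ind N' I \<longleftrightarrow> ind N I"
  shows "represents R k v N' A"
  using assms unfolding represents_def by blast

lemma simplification_parallel_map:
  assumes "is_simplification_set (delete M X) S"
  obtains \<sigma> where "S \<subseteq> gr M - X" "\<forall>s\<in>S. ind M {s}"
    "\<And>e. e \<in> gr M - X \<Longrightarrow> ind M {e} \<Longrightarrow> \<sigma> e \<in> S \<and> (e = \<sigma> e \<or> \<not> ind M {e, \<sigma> e})"
proof -
  have S: "S \<subseteq> gr M - X" "\<forall>s\<in>S. ind M {s}"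
    using assms unfolding is_simplification_set_def by auto
  have "\<forall>e\<in>gr M - X. ind M {e} \<longrightarrow> (\<exists>s\<in>S. e = s \<or> \<not> ind M {e, s})"
    using assms unfolding is_simplification_set_def by auto
  then obtain \<sigma> where "\<And>e. e \<in> gr M - X \<Longrightarrow> ind M {e} \<Longrightarrow> \<sigma> e \<in> S \<and> (e = \<sigma> e \<or> \<not> ind M {e, \<sigma> e})"
    by metis
  with S that show ?thesis by blast
qed

context field
begin

lemma represents_via_PG:
  assumes "S \<subseteq> gr M - X" "matroid_iso (restrict (delete M X) S) (PG_matroid R k)"
  shows "\<exists>u. represents R k u M S"
proof -
  obtain f where f: "bij_betw f S (gr (PG_matroid R k))"
    "\<forall>I\<subseteq>S. ind (restrict (delete M X) S) I \<longleftrightarrow> ind (PG_matroid R k) (f ` I)"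
    using assms(2) unfolding matroid_iso_def by auto
  have fS: "f ` I \<subseteq> gr (PG_matroid R k)" if "I \<subseteq> S" for I
    using f(1) that bij_betw_imp_surj_on by blast
  have u: "\<forall>s\<in>S. point_vec R k (f s) \<in> vecs R k" using point_vec fS by blast
  have "ind M I \<longleftrightarrow> lin_indep R k (\<lambda>s. point_vec R k (f s)) I" if I: "I \<subseteq> S" for I
  proof -
    have "ind M I \<longleftrightarrow> ind (PG_matroid R k) (f ` I)" using f(2) I assms(1) by auto
    also have "\<dots> \<longleftrightarrow> lin_indep R k (point_vec R k) (f ` I)"
      using ind_PG_iff_lin_indep[OF fS[OF I]] .
    also have "\<dots> \<longleftrightarrow> lin_indep R k (\<lambda>s. point_vec R k (f s)) I"
      using lin_indep_reindex[of f I "point_vec R k"] u I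
        inj_on_subset[OF bij_betw_imp_inj_on[OF f(1)]] by blast
    finally show ?thesis .
  qed
  hence "represents R k (\<lambda>s. point_vec R k (f s)) M S" using u unfolding represents_def by blast
  thus ?thesis by blast
qed

lemma lin_indep_copied_family:
  assumes J: "finite J" and u: "\<forall>e\<in>J. P e \<longrightarrow> u (\<sigma> e) \<in> vecs R k"
  shows "lin_indep R k (\<lambda>e. if P e then u (\<sigma> e) else zvec R) J
     \<longleftrightarrow> (\<forall>e\<in>J. P e) \<and> inj_on \<sigma> J \<and> lin_indep R k u (\<sigma> ` J)"
proof -
  define v where "v = (\<lambda>e. if P e then u (\<sigma> e) else zvec R)"
  have vJ: "\<forall>e\<in>J. v e \<in> vecs R k" using u zvec_vecs by (simp add: v_def)
  have "lin_indep R k v J \<longleftrightarrow> (\<forall>e\<in>J. P e) \<and> inj_on \<sigma> J \<and> lin_indep R k u (\<sigma> ` J)"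
  proof (cases "\<forall>e\<in>J. P e")
    case False
    then obtain e where "e \<in> J" "\<not> P e" by blast
    hence "\<not> lin_indep R k v J"
      using not_lin_indep_zero[OF J _ _ vJ] by (simp add: v_def zvec_def)
    thus ?thesis using False by blast
  next
    case P: True
    show ?thesis
    proof (cases "inj_on \<sigma> J")
      case False
      then obtain e1 e2 where e: "e1 \<in> J" "e2 \<in> J" "e1 \<noteq> e2" "\<sigma> e1 = \<sigma> e2"
        unfolding inj_on_def by blast
      hence "\<not> lin_indep R k v J" using not_lin_indep_repeat[OF J e(1-3) _ vJ] P by (simp add: v_def)
      thus ?thesis using False by blast
    next
      case True
      have u\<sigma>J: "\<forall>s\<in>\<sigma> ` J. u s \<in> vecs R k" using u P by blast
      have "lin_indep R k v J \<longleftrightarrow> lin_indep R k (\<lambda>e. u (\<sigma> e)) J"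
        using lin_indep_cong[of J v "\<lambda>e. u (\<sigma> e)"] P vJ by (simp add: v_def)
      also have "\<dots> \<longleftrightarrow> lin_indep R k u (\<sigma> ` J)" using lin_indep_reindex[OF True u\<sigma>J] .
      finally show ?thesis using P True by blast
    qed
  qed
  thus ?thesis unfolding v_def .
qed

end

context finite_matroid
begin

lemma represents_parallel_extension:
  assumes R: "field R" and u: "represents R k u M S" and A: "A \<subseteq> gr M"
    and S: "\<forall>s\<in>S. ind M {s}"
    and \<sigma>: "\<And>e. e \<in> A \<Longrightarrow> ind M {e} \<Longrightarrow> \<sigma> e \<in> S \<and> (e = \<sigma> e \<or> \<not> ind M {e, \<sigma> e})"
  shows "represents R k (\<lambda>e. if ind M {e} then u (\<sigma> e) else zvec R) M A"
proof -
  have u_vecs: "\<forall>s\<in>S. u s \<in> vecs R k" and u_ind: "\<forall>I\<subseteq>S. ind M I \<longleftrightarrow> lin_indep R k u I"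
    using u unfolding represents_def by blast+
  have copied: "\<forall>e\<in>J. ind M {e} \<longrightarrow> u (\<sigma> e) \<in> vecs R k" if "J \<subseteq> A" for J
    using \<sigma> u_vecs that by blast
  have "ind M J \<longleftrightarrow> lin_indep R k (\<lambda>e. if ind M {e} then u (\<sigma> e) else zvec R) J"
    if J: "J \<subseteq> A" for J
  proof -
    have "J \<subseteq> gr M" using J A by blast
    hence fJ: "finite J" using finite_ground by (rule finite_subset)
    have par: "\<And>e. e \<in> J \<Longrightarrow> ind M {e} \<Longrightarrow> ind M {\<sigma> e} \<and> (e = \<sigma> e \<or> \<not> ind M {e, \<sigma> e})"
      using \<sigma> S J by blast
    have "(\<forall>e\<in>J. ind M {e}) \<longrightarrow> (ind M (\<sigma> ` J) \<longleftrightarrow> lin_indep R k u (\<sigma> ` J))"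
      using u_ind \<sigma> J by blast
    thus ?thesis
      using ind_iff_parallel_image[OF fJ par] field.lin_indep_copied_family[OF R fJ, where P = "\<lambda>e. ind M {e}" and u = u and \<sigma> = \<sigma>]
        copied[OF J]
      by blast
  qed
  moreover have "zvec R \<in> vecs R k"
    using field.zvec_vecs[OF R] .
  hence "\<forall>e\<in>A. (if ind M {e} then u (\<sigma> e) else zvec R) \<in> vecs R k" using copied[of A] by simp
  ultimately show ?thesis unfolding represents_def by blast
qed

lemma represents_deletion_of_PG:
  assumes "field R" "is_simplification_set (delete M X) S"
    "matroid_iso (restrict (delete M X) S) (PG_matroid R k)"
  shows "\<exists>v. represents R k v M (gr M - X)"
proof -
  obtain \<sigma> where \<sigma>: "S \<subseteq> gr M - X" "\<forall>s\<in>S. ind M {s}"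
    "\<And>e. e \<in> gr M - X \<Longrightarrow> ind M {e} \<Longrightarrow> \<sigma> e \<in> S \<and> (e = \<sigma> e \<or> \<not> ind M {e, \<sigma> e})"
    using simplification_parallel_map[OF assms(2)] by blast
  obtain u where u: "represents R k u M S"
    using field.represents_via_PG[OF assms(1) \<sigma>(1) assms(3)] by blast
  show ?thesis using represents_parallel_extension[OF assms(1) u Diff_subset \<sigma>(2,3)] by blast
qed

end

section \<open>The stalling layer of a stack\<close>

lemma antitone_stall:
  fixes a :: "nat \<Rightarrow> nat"
  assumes "\<forall>i<n. a (Suc i) \<le> a i" "a 0 < n"
  shows "\<exists>i<n. a (Suc i) = a i"
proof (rule ccontr)
  assume "\<not> ?thesis"
  hence strict: "\<forall>i<n. a (Suc i) < a i" using assms(1) le_neq_implies_less by blast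
  have "a m + m \<le> a 0" if "m \<le> n" for m
    using that
  proof (induction m)
    case (Suc m)
    hence "a (Suc m) < a m" using strict by simp
    thus ?case using Suc by simp
  qed simp
  from this[of n] show False using assms(2) by simp
qed

context finite_matroid
begin

lemma chain_drop_stall:
  assumes "\<forall>i<n. U i \<subseteq> U (Suc i)" "\<forall>i\<le>n. U i \<inter> X = {}" "U 0 = {}" "mrank M X < n"
  shows "\<exists>i<n. mrank M (U (Suc i) \<union> X) - mrank M (U (Suc i)) = mrank M (U i \<union> X) - mrank M (U i)"
proof -
  define a where "a i = mrank M (U i \<union> X) - mrank M (U i)" for i
  have "a (Suc i) \<le> a i" if "i < n" for i
  proof -
    have "mrank M (U (Suc i) \<union> X) + mrank M (U i) \<le> mrank M (U i \<union> X) + mrank M (U (Suc i))"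
      using rank_drop_antitone assms(1,2) that by simp
    moreover have "mrank M (U i) \<le> mrank M (U i \<union> X)"
      "mrank M (U (Suc i)) \<le> mrank M (U (Suc i) \<union> X)" by (rule rank_mono, blast)+
    ultimately show ?thesis unfolding a_def by linarith
  qed
  moreover have "a 0 = mrank M X" using assms(3) a_def by simp
  ultimately show ?thesis using antitone_stall[of n a] assms(4) unfolding a_def by auto
qed

lemma layer_ind_iff:
  assumes F0: "F0 \<subseteq> gr M - X" and U: "U \<subseteq> F0" and F: "F \<subseteq> F0" "F \<inter> U = {}"
    and drop_eq: "mrank M (U \<union> F \<union> X) - mrank M (U \<union> F) = mrank M (U \<union> X) - mrank M U"
    and I: "I \<subseteq> F"
  shows "ind (restrict (contract (restrict (contract M X) F0) U) F) I
     \<longleftrightarrow> ind (restrict (contract M U) F) I"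
proof -
  let ?N = "restrict (contract M X) F0"
  have rank_N: "mrank ?N Y = mrank M (Y \<union> X) - mrank M X" if "Y \<subseteq> F0" for Y
    using rank_restrict[OF that] rank_contract[of Y X] that F0 by auto
  have IU: "I \<union> U \<subseteq> F0" "I \<subseteq> F0 - U" "I \<subseteq> gr M - U" using I F U F0 by auto
  have "mrank M X \<le> mrank M (U \<union> X)" "mrank M (U \<union> X) \<le> mrank M (I \<union> U \<union> X)"
    by (rule rank_mono, blast)+
  hence "mrank ?N (I \<union> U) = card I + mrank ?N U
      \<longleftrightarrow> mrank M (I \<union> U \<union> X) = card I + mrank M (U \<union> X)"
    unfolding rank_N[OF IU(1)] rank_N[OF U] by arith
  also have "\<dots> \<longleftrightarrow> mrank M (I \<union> U) = card I + mrank M U"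
    by (rule contract_skew_equiv[of U "U \<union> F"]) (use F0 U F I drop_eq in auto)
  finally show ?thesis using I IU by simp
qed

text \<open>Contraction preserves representability: contracting U amounts to contracting a basis
  of U, which linear algebra handles by elimination.\<close>
lemma represents_contract:
  assumes R: "field R" and v: "represents R k v M A" and A: "A \<subseteq> gr M"
    and UF: "U \<subseteq> A" "F \<subseteq> A" "F \<inter> U = {}"
  shows "\<exists>w. represents R k w (restrict (contract M U) F) F"
proof -
  obtain B where B: "B \<subseteq> U" "ind M B" "card B = mrank M U" using basis_exists by blast
  have "F \<subseteq> gr M" using UF(2) A by blast
  hence fF: "finite F" using finite_ground by (rule finite_subset)
  have "lin_indep R k v B" "\<forall>e\<in>B \<union> F. v e \<in> vecs R k"
    using v B UF unfolding represents_def by blast+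
  then obtain w where w: "\<forall>e\<in>F. w e \<in> vecs R k"
    "\<forall>I\<subseteq>F. lin_indep R k w I \<longleftrightarrow> lin_indep R k v (I \<union> B)"
    using field.lin_indep_contract[OF R ind_finite[OF B(2)] fF] B(1) UF(3) by blast
  have "\<forall>I\<subseteq>F. ind (restrict (contract M U) F) I \<longleftrightarrow> lin_indep R k w I"
  proof (intro allI impI)
    fix I assume I: "I \<subseteq> F"
    have fI: "finite I" using finite_subset[OF I fF] .
    have "I \<inter> U = {}" using I UF(3) by blast
    have "ind (restrict (contract M U) F) I \<longleftrightarrow> mrank M (I \<union> U) = card I + mrank M U"
      using I UF A by auto
    also have "\<dots> \<longleftrightarrow> ind M (I \<union> B)"
      using contract_basis_equiv[OF B fI \<open>I \<inter> U = {}\<close>] .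
    also have "\<dots> \<longleftrightarrow> lin_indep R k v (I \<union> B)"
    proof -
      have "I \<union> B \<subseteq> A" using I B(1) UF(1,2) by blast
      thus ?thesis using v unfolding represents_def by blast
    qed
    also have "\<dots> \<longleftrightarrow> lin_indep R k w I" using w(2) I by blast
    finally show "ind (restrict (contract M U) F) I \<longleftrightarrow> lin_indep R k w I" .
  qed
  with w(1) have "represents R k w (restrict (contract M U) F) F"
    unfolding represents_def by (rule conjI)
  thus ?thesis by blast
qed

lemma layer_representable:
  fixes R :: "nat ring"
  assumes R: "field R" "finite (carrier R)" "card (carrier R) = q"
    and v: "represents R k v M (gr M - X)"
    and F0: "F0 \<subseteq> gr M - X" and U: "U \<subseteq> F0" and F: "F \<subseteq> F0" "F \<inter> U = {}"
    and drop_eq: "mrank M (U \<union> F \<union> X) - mrank M (U \<union> F) = mrank M (U \<union> X) - mrank M U"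
  shows "representable q (restrict (contract (restrict (contract M X) F0) U) F)"
proof -
  have "U \<subseteq> gr M - X" "F \<subseteq> gr M - X" using F0 U F(1) by blast+
  then obtain w where "represents R k w (restrict (contract M U) F) F"
    using represents_contract[OF R(1) v Diff_subset _ _ F(2)] by blast
  moreover have "\<forall>I\<subseteq>F. ind (restrict (contract (restrict (contract M X) F0) U) F) I
      \<longleftrightarrow> ind (restrict (contract M U) F) I"
    using layer_ind_iff[OF F0 U F drop_eq] by blast
  ultimately have "represents R k w (restrict (contract (restrict (contract M X) F0) U) F) F"
    by (rule represents_cong)
  thus ?thesis using representableI[OF R] by (metis gr_restrict)
qed


text \<open>If M restricted to E(M) - X is represented over a field of order q and r(X) \<le> h, then
  no restriction of M/X is a (q,h+1)-stack: along the stack layers the drop stalls, and the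
  stalling layer is representable.\<close>
lemma no_stack_over_represented:
  fixes R :: "nat ring"
  assumes R: "field R" "finite (carrier R)" "card (carrier R) = q"
    and v: "represents R k v M (gr M - X)"
    and F0: "F0 \<subseteq> gr M - X" and h: "mrank M X \<le> h"
  shows "\<not> is_stack q (h + 1) t (restrict (contract M X) F0)"
proof
  assume "is_stack q (h + 1) t (restrict (contract M X) F0)"
  then obtain F where F: "\<forall>i<h + 1. F i \<subseteq> F0" "\<forall>i<h + 1. \<forall>j<h + 1. i \<noteq> j \<longrightarrow> F i \<inter> F j = {}"
    and nonrep: "\<forall>i<h + 1. \<not> representable q
        (restrict (contract (restrict (contract M X) F0) (\<Union>j<i. F j)) (F i))"
    unfolding is_stack_def Let_def by auto
  define U where "U i = (\<Union>j<i. F j)" for i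
  have U_Suc: "U (Suc i) = U i \<union> F i" for i unfolding U_def by (simp add: lessThan_Suc Un_commute)
  have U_F0: "U i \<subseteq> F0" if "i \<le> h + 1" for i
    unfolding U_def using F(1) that by (intro UN_least) simp
  have "\<exists>i<h + 1. mrank M (U (Suc i) \<union> X) - mrank M (U (Suc i)) = mrank M (U i \<union> X) - mrank M (U i)"
  proof (rule chain_drop_stall)
    show "\<forall>i\<le>h + 1. U i \<inter> X = {}" using U_F0 F0 by blast
  qed (use U_Suc h in \<open>auto simp: U_def\<close>)
  then obtain i where i: "i < h + 1"
    and drop_eq: "mrank M (U i \<union> F i \<union> X) - mrank M (U i \<union> F i) = mrank M (U i \<union> X) - mrank M (U i)"
    unfolding U_Suc by blast
  have "F i \<inter> F j = {}" if "j < i" for j using F(2) i that by simp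
  hence "F i \<inter> U i = {}" unfolding U_def by blast
  moreover have "U i \<subseteq> F0" "F i \<subseteq> F0" using U_F0 F(1) i by simp_all
  ultimately have "representable q (restrict (contract (restrict (contract M X) F0) (U i)) (F i))"
    using layer_representable[OF R v F0 _ _ _ drop_eq] by blast
  thus False using nonrep i unfolding U_def by blast
qed

end

theorem lemma4p1:
  fixes q h :: nat and M :: "'a matroid" and X :: "'a set"
  assumes "prime_power q"
    and "matroid M"
    and "X \<subseteq> gr M"
    and "mrank M X \<le> h"
    and "\<exists>S. is_simplification_set (delete M X) S \<and>
              iso_PG (restrict (delete M X) S) (mrank M (gr M)) q"
  shows "\<not> has_stack_restriction q (h + 1) (contract M X)"
proof
  interpret finite_matroid M using assms(2) by (rule finite_matroid.intro)
  assume "has_stack_restriction q (h + 1) (contract M X)"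
  then obtain F0 t where F0: "F0 \<subseteq> gr M - X"
    and stack: "is_stack q (h + 1) t (restrict (contract M X) F0)"
    unfolding has_stack_restriction_def by auto
  obtain S and R :: "nat ring" where S: "is_simplification_set (delete M X) S"
    and R: "field R" "finite (carrier R)" "card (carrier R) = q"
    and PG: "matroid_iso (restrict (delete M X) S) (PG_matroid R (mrank M (gr M)))"
    using assms(5) unfolding iso_PG_def by blast
  obtain v where "represents R (mrank M (gr M)) v M (gr M - X)"
    using represents_deletion_of_PG[OF R(1) S PG] by blast
  with no_stack_over_represented[OF R _ F0 assms(4)] stack show False by blast
qed

end
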